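(* Let $T$ be a tree of order $n>1$ rooted at a vertex $v$, and let $l\ne v$ be a leaf of $T$. Then the number of subtrees of $T$ containing both $v$ and $l$ is at most $2^{n-2}$, with equality if and only if $T$ is the star $S_n$ and $v$ is its center (i.e. $v$ is adjacent to every other vertex of $T$).
   Context: A subtree of a tree $T$ is a connected subgraph of $T$, determined by its nonempty vertex set. A leaf is a vertex of degree $1$. The star $S_n$ consists of a central vertex adjacent to $n-1$ leaves. *)

theory Defs
  imports Main
begin

definition simple_graph :: "'a set \<Rightarrow> 'a set set \<Rightarrow> bool" where
  "simple_graph V E \<longleftrightarrow> finite V \<and>
     (\<forall>e\<in>E. \<exists>u w. e = {u, w} \<and> u \<noteq> w \<and> u \<in> V \<and> w \<in> V)"

definition connected_on :: "'a set set \<Rightarrow> 'a set \<Rightarrow> bool" where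
  "connected_on E S \<longleftrightarrow> S \<noteq> {} \<and>
     (\<forall>u\<in>S. \<forall>w\<in>S. (\<lambda>x y. x \<in> S \<and> y \<in> S \<and> {x, y} \<in> E)\<^sup>*\<^sup>* u w)"

definition is_cycle :: "'a set set \<Rightarrow> 'a list \<Rightarrow> bool" where
  "is_cycle E cs \<longleftrightarrow> length cs \<ge> 3 \<and> distinct cs \<and>
     (\<forall>i < length cs. {cs ! i, cs ! ((i + 1) mod length cs)} \<in> E)"

definition is_tree :: "'a set \<Rightarrow> 'a set set \<Rightarrow> bool" where
  "is_tree V E \<longleftrightarrow> simple_graph V E \<and> connected_on E V \<and> \<not> (\<exists>cs. is_cycle E cs)"

definition degree :: "'a set set \<Rightarrow> 'a \<Rightarrow> nat" where
  "degree E v = card {u. {u, v} \<in> E}"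

definition is_leaf :: "'a set set \<Rightarrow> 'a \<Rightarrow> bool" where
  "is_leaf E v \<longleftrightarrow> degree E v = 1"

definition subtrees :: "'a set \<Rightarrow> 'a set set \<Rightarrow> 'a set set" where
  "subtrees V E = {S. S \<subseteq> V \<and> connected_on E S}"

end

theory Submission
  imports Defs
begin

text \<open>Every subtree containing \<open>v\<close> and \<open>l\<close> is determined by its remaining vertices, a subset of
  the \<open>n - 2\<close> other vertices; this gives the bound. Equality means every vertex set containing
  \<open>v\<close> and \<open>l\<close> is connected. Applied to \<open>{v, l}\<close> this makes \<open>l\<close> adjacent to \<open>v\<close>, and applied to
  \<open>{v, l, u}\<close> it makes \<open>u\<close> adjacent to \<open>v\<close> or \<open>l\<close>, where the latter is excluded since the leaf \<open>l\<close>
  already has its only neighbour \<open>v\<close>. Conversely, in a star every vertex set containing the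
  centre is connected.\<close>

lemma card_supersets_within:
  assumes "finite V" "K \<subseteq> V"
  shows "card {S. K \<subseteq> S \<and> S \<subseteq> V} = 2 ^ (card V - card K)"
proof -
  have "bij_betw (\<lambda>A. A \<union> K) (Pow (V - K)) {S. K \<subseteq> S \<and> S \<subseteq> V}"
    by (rule bij_betw_byWitness[where f' = "\<lambda>S. S - K"]) (use assms(2) in auto)
  then have "card {S. K \<subseteq> S \<and> S \<subseteq> V} = card (Pow (V - K))"
    by (simp add: bij_betw_same_card)
  also have "\<dots> = 2 ^ (card V - card K)"
    using assms by (simp add: card_Pow card_Diff_subset finite_subset)
  finally show ?thesis .
qed

lemma card_family_of_supersets:
  assumes "finite V" "K \<subseteq> V" "C \<subseteq> {S. K \<subseteq> S \<and> S \<subseteq> V}"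
  shows "card C \<le> 2 ^ (card V - card K)"
    and "card C = 2 ^ (card V - card K) \<longleftrightarrow> C = {S. K \<subseteq> S \<and> S \<subseteq> V}"
proof -
  have fin: "finite {S. K \<subseteq> S \<and> S \<subseteq> V}"
    using assms(1) by (auto intro: finite_subset[of _ "Pow V"])
  show "card C \<le> 2 ^ (card V - card K)"
    using card_mono[OF fin assms(3)] card_supersets_within[OF assms(1,2)] by simp
  show "card C = 2 ^ (card V - card K) \<longleftrightarrow> C = {S. K \<subseteq> S \<and> S \<subseteq> V}"
    using card_subset_eq[OF fin assms(3)] card_supersets_within[OF assms(1,2)] by auto
qed

lemma simple_graph_edge_distinct:
  assumes "simple_graph V E" "{u, w} \<in> E"
  shows "u \<noteq> w"
proof -
  obtain a b where "{u, w} = {a, b}" "a \<noteq> b"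
    using assms unfolding simple_graph_def by blast
  then show ?thesis by (auto simp: doubleton_eq_iff)
qed

lemma connected_on_neighbour:
  assumes "connected_on E S" "u \<in> S" "w \<in> S" "u \<noteq> w"
  shows "\<exists>y\<in>S. {u, y} \<in> E"
proof -
  from assms(1-3) have "(\<lambda>x y. x \<in> S \<and> y \<in> S \<and> {x, y} \<in> E)\<^sup>*\<^sup>* u w"
    by (auto simp: connected_on_def)
  then show ?thesis
    by (cases rule: converse_rtranclpE) (use assms(4) in auto)
qed

lemma leaf_neighbour_unique:
  assumes "is_leaf E l" "{u, l} \<in> E" "{w, l} \<in> E"
  shows "u = w"
proof -
  have "card {x. {x, l} \<in> E} = 1"
    using assms(1) by (simp add: is_leaf_def degree_def)
  then obtain x where "{x. {x, l} \<in> E} = {x}"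
    by (rule card_1_singletonE)
  then show ?thesis
    using assms(2,3) by (metis mem_Collect_eq singletonD)
qed

lemma connected_on_star:
  assumes star: "\<forall>u\<in>V. u \<noteq> v \<longrightarrow> {u, v} \<in> E" and "S \<subseteq> V" "v \<in> S"
  shows "connected_on E S"
proof -
  let ?R = "\<lambda>x y. x \<in> S \<and> y \<in> S \<and> {x, y} \<in> E"
  have to_centre: "?R\<^sup>*\<^sup>* u v" if "u \<in> S" for u
  proof (cases "u = v")
    case False
    then have "?R u v" using that assms by auto
    then show ?thesis by (rule r_into_rtranclp)
  qed simp
  have from_centre: "?R\<^sup>*\<^sup>* v u" if "u \<in> S" for u
  proof (cases "u = v")
    case False
    then have "?R v u" using that assms by (auto simp: insert_commute)
    then show ?thesis by (rule r_into_rtranclp)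
  qed simp
  show ?thesis
    unfolding connected_on_def using assms(3) to_centre from_centre
    by (meson empty_iff rtranclp_trans)
qed

lemma star_if_supersets_of_leaf_connected:
  assumes "simple_graph V E" "is_leaf E l" "v \<in> V" "l \<in> V" "l \<noteq> v"
    and conn: "\<And>S. {v, l} \<subseteq> S \<Longrightarrow> S \<subseteq> V \<Longrightarrow> connected_on E S"
  shows "\<forall>u\<in>V. u \<noteq> v \<longrightarrow> {u, v} \<in> E"
proof (intro ballI impI)
  have "\<exists>y\<in>{v, l}. {l, y} \<in> E"
    using connected_on_neighbour[OF conn, of "{v, l}" l v] assms(3-5) by auto
  then obtain y where "y \<in> {v, l}" "{l, y} \<in> E" ..
  moreover have "l \<noteq> y"
    using simple_graph_edge_distinct[OF assms(1) \<open>{l, y} \<in> E\<close>] .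
  ultimately have lv: "{v, l} \<in> E"
    by (auto simp: insert_commute)
  fix u assume u: "u \<in> V" "u \<noteq> v"
  show "{u, v} \<in> E"
  proof (cases "u = l")
    case True
    then show ?thesis using lv by (simp add: insert_commute)
  next
    case False
    have "\<exists>y\<in>{v, l, u}. {u, y} \<in> E"
      using connected_on_neighbour[OF conn, of "{v, l, u}" u v] u assms(3,4) by auto
    then obtain y where "y \<in> {v, l, u}" "{u, y} \<in> E" ..
    moreover have "u \<noteq> y"
      using simple_graph_edge_distinct[OF assms(1) \<open>{u, y} \<in> E\<close>] .
    moreover have "{u, l} \<notin> E"
      using leaf_neighbour_unique[OF assms(2) _ lv] u(2) by blast
    ultimately show ?thesis
      by auto
  qed
qed

theorem mainTheorem12:
  fixes V :: "'a set" and E :: "'a set set" and v l :: 'a and n :: nat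
  assumes "is_tree V E" and "card V = n" and "n > 1"
    and "v \<in> V" and "l \<in> V" and "l \<noteq> v" and "is_leaf E l"
  shows "card {S \<in> subtrees V E. v \<in> S \<and> l \<in> S} \<le> 2 ^ (n - 2) \<and>
         (card {S \<in> subtrees V E. v \<in> S \<and> l \<in> S} = 2 ^ (n - 2) \<longleftrightarrow>
            (\<forall>u\<in>V. u \<noteq> v \<longrightarrow> {u, v} \<in> E))"
proof -
  have sg: "simple_graph V E" and fin: "finite V"
    using assms(1) by (auto simp: is_tree_def simple_graph_def)
  let ?C = "{S \<in> subtrees V E. v \<in> S \<and> l \<in> S}"
  have K: "{v, l} \<subseteq> V" and card_K: "card V - card {v, l} = n - 2"
    using assms(2,4-6) by auto
  have C: "?C \<subseteq> {S. {v, l} \<subseteq> S \<and> S \<subseteq> V}"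
    by (auto simp: subtrees_def)
  have "?C = {S. {v, l} \<subseteq> S \<and> S \<subseteq> V} \<longleftrightarrow> (\<forall>u\<in>V. u \<noteq> v \<longrightarrow> {u, v} \<in> E)"
  proof
    assume "?C = {S. {v, l} \<subseteq> S \<and> S \<subseteq> V}"
    then have "\<And>S. {v, l} \<subseteq> S \<Longrightarrow> S \<subseteq> V \<Longrightarrow> connected_on E S"
      by (auto simp: subtrees_def)
    then show "\<forall>u\<in>V. u \<noteq> v \<longrightarrow> {u, v} \<in> E"
      using star_if_supersets_of_leaf_connected[OF sg assms(7,4-6)] by blast
  next
    assume "\<forall>u\<in>V. u \<noteq> v \<longrightarrow> {u, v} \<in> E"
    then show "?C = {S. {v, l} \<subseteq> S \<and> S \<subseteq> V}"
      using connected_on_star by (fastforce simp: subtrees_def)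
  qed
  then show ?thesis
    using card_family_of_supersets[OF fin K C] card_K by simp
qed

end
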